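(* Let $t,m,r$ be positive integers with $r\geq 2$. If $r(3r-1)$ is not equal to $(mk^{2}-(m-2)k)t$ for any positive integer $k$, then there exists an integer $n$ with $2r-1\le n\le \frac{r(3r-1)}{2}$ such that $p_{mt,t}(n)$ is odd.
   Context: A partition $\lambda$ of a non-negative integer $n$ is a non-increasing sequence of positive integers (its parts) summing to $n$. For positive integers $A$ and $a$, $\mathrm{mex}_{A,a}(\lambda)$ denotes the smallest positive integer congruent to $a$ modulo $A$ that is not a part of $\lambda$. Then $p_{A,a}(n)$ denotes the number of partitions $\lambda$ of $n$ satisfying $\mathrm{mex}_{A,a}(\lambda)\equiv a \pmod{2A}$. *)

theory Defs
  imports Main
begin

definition partitions :: "nat \<Rightarrow> nat list set" where
  "partitions n = {xs. sorted (rev xs) \<and> (\<forall>x\<in>set xs. 0 < x) \<and> sum_list xs = n}"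

definition mex :: "nat \<Rightarrow> nat \<Rightarrow> nat list \<Rightarrow> nat" where
  "mex A a xs = (LEAST k. 0 < k \<and> k mod A = a mod A \<and> k \<notin> set xs)"

definition p_mex :: "nat \<Rightarrow> nat \<Rightarrow> nat \<Rightarrow> nat" where
  "p_mex A a n = card {xs \<in> partitions n. mex A a xs mod (2 * A) = a mod (2 * A)}"

end

theory Submission
  imports Defs "HOL-Library.Multiset" "HOL-Library.Z2" "HOL-Library.Disjoint_Sets"
begin

text \<open>Work modulo 2. With A = m t, a partition has mex_{A,t} = t + i A exactly when
  t, t + A, ..., t + (i - 1) A are parts and t + i A is not; p_{A,t}(n) counts those with i even.
  Counting each partition i + 1 times, once for every prefix of the progression it contains, gives
  p_{A,t}(n) = sum_j p(n - e_j) mod 2, where e_j = t + (t + A) + ... + (t + (j - 1) A)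
  = (m j^2 - (m - 2) j) t / 2. Modulo 2 the product of the generating functions of partitions and of
  partitions into distinct parts is 1 (moving the least part from one side to the other pairs up
  everything else), and by Franklin's involution the number of partitions of k into distinct parts
  is odd exactly for generalised pentagonal k. Hence the sum of p_{A,t}(N - g) over generalised
  pentagonal g is odd iff N is some e_j. For the pentagonal N = r (3 r - 1) / 2, which by
  hypothesis is no e_j, the term g = N is p_{A,t}(0) = 1, so some pentagonal g < N has
  p_{A,t}(N - g) odd, and the gap below the pentagonal number N forces N - g >= 2 r - 1.\<close>

section \<open>Parity of involutions and Franklin's involution\<close>

lemma of_nat_bit_eq: "(of_nat n :: bit) = of_bool (odd n)"
  by (induction n) auto

lemma even_card_involution:
  assumes "\<And>x. x \<in> X \<Longrightarrow> h x \<in> X" "\<And>x. x \<in> X \<Longrightarrow> h (h x) = x"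
    and "\<And>x. x \<in> X \<Longrightarrow> h x \<noteq> x"
  shows "even (card X)"
proof -
  have "(\<Sum>x\<in>X. 1 :: bit) = 0"
    by (rule sum_involution_eq_0[where h = h])
      (simp_all only: one_add_one bit_2_eq_0 assms not_False_eq_True)
  then show ?thesis by (simp add: of_nat_bit_eq)
qed

lemma even_card_iff_even_card_fixpoints:
  assumes "finite X" "\<And>x. x \<in> X \<Longrightarrow> h x \<in> X" "\<And>x. x \<in> X \<Longrightarrow> h (h x) = x"
  shows "even (card X) \<longleftrightarrow> even (card {x\<in>X. h x = x})"
proof -
  have "card X = card ({x\<in>X. h x \<noteq> x} \<union> {x\<in>X. h x = x})"
    by (rule arg_cong[where f = card]) auto
  also have "\<dots> = card {x\<in>X. h x \<noteq> x} + card {x\<in>X. h x = x}"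
    by (rule card_Un_disjoint) (use assms(1) in auto)
  finally have "card X = card {x\<in>X. h x \<noteq> x} + card {x\<in>X. h x = x}" .
  moreover have "even (card {x\<in>X. h x \<noteq> x})"
    by (rule even_card_involution[where h = h]) (use assms in auto)
  ultimately show ?thesis by simp
qed

definition distinct_parts :: "nat \<Rightarrow> nat set set" where
  "distinct_parts k = {S. finite S \<and> 0 \<notin> S \<and> \<Sum>S = k}"

definition gen_pentagonal :: "nat \<Rightarrow> bool" where
  "gen_pentagonal k \<longleftrightarrow> (\<exists>z::int. 2 * int k = z * (3 * z - 1))"

definition slope :: "nat set \<Rightarrow> nat" where
  "slope S = (LEAST j. Max S - j \<notin> S)"

definition franklin_exceptional :: "nat set \<Rightarrow> bool" where
  "franklin_exceptional S \<longleftrightarrow>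
     S \<noteq> {} \<and> Min S = Max S + 1 - slope S \<and> (Min S = slope S \<or> Min S = slope S + 1)"

text \<open>A partition into distinct parts is identified with its set S of parts; let M = Max S.
  Removing the smallest part s and adding 1 to the s largest parts replaces M + 1 - s by M + 1;
  subtracting 1 from the d = slope S largest parts and adding a part d replaces M by M - d.\<close>
definition franklin :: "nat set \<Rightarrow> nat set" where
  "franklin S = (if Min S \<le> slope S then insert (Max S + 1) (S - {Min S, Max S + 1 - Min S})
                 else insert (slope S) (insert (Max S - slope S) (S - {Max S})))"

lemma Max_minus_slope_notin:
  assumes "0 \<notin> S"
  shows "Max S - slope S \<notin> S"
  unfolding slope_def by (rule LeastI[of _ "Max S"]) (simp add: assms)

lemma slope_le_Max:
  assumes "0 \<notin> S"
  shows "slope S \<le> Max S"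
  unfolding slope_def by (rule Least_le) (simp add: assms)

lemma Max_minus_in_if_less_slope: "j < slope S \<Longrightarrow> Max S - j \<in> S"
  unfolding slope_def using not_less_Least by blast

lemma slope_pos:
  assumes "finite S" "S \<noteq> {}" "0 \<notin> S"
  shows "0 < slope S"
proof (rule ccontr)
  assume "\<not> 0 < slope S"
  then show False using Max_minus_slope_notin[OF assms(3)] Max_in[OF assms(1,2)] by simp
qed

lemma slope_eqI:
  assumes "\<And>j. j < d \<Longrightarrow> Max S - j \<in> S" "Max S - d \<notin> S"
  shows "slope S = d"
  unfolding slope_def
proof (rule Least_equality)
  show "Max S - d \<notin> S" by fact
  show "\<And>y. Max S - y \<notin> S \<Longrightarrow> d \<le> y" using assms(1) by (meson not_le)
qed

lemma Max_plus_one_minus_slope_in: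
  assumes "finite S" "S \<noteq> {}" "0 \<notin> S"
  shows "Max S + 1 - slope S \<in> S"
proof -
  have "Max S - (slope S - 1) \<in> S"
    by (rule Max_minus_in_if_less_slope) (use slope_pos[OF assms] in simp)
  moreover have "Max S - (slope S - 1) = Max S + 1 - slope S"
    using slope_pos[OF assms] slope_le_Max[OF assms(3)] by linarith
  ultimately show ?thesis by simp
qed

lemma franklin_up_bounds:
  assumes S: "finite S" "S \<noteq> {}" "0 \<notin> S" "\<not> franklin_exceptional S" and up: "Min S \<le> slope S"
  shows "Min S < Max S + 1 - Min S" "Max S + 1 - Min S \<in> S"
proof -
  have top: "Min S \<le> Max S + 1 - slope S"
    using Max_plus_one_minus_slope_in[OF S(1-3)] S(1) by simp
  show "Min S < Max S + 1 - Min S"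
  proof (cases "Min S = Max S + 1 - slope S")
    case True
    then have "Min S < slope S" using S(2,4) up unfolding franklin_exceptional_def by auto
    then show ?thesis using True slope_le_Max[OF S(3)] by linarith
  qed (use top up in linarith)
  have "0 < Min S" using Min_in[OF S(1,2)] S(3) by (metis gr0I)
  then have "Max S - (Min S - 1) \<in> S" by (intro Max_minus_in_if_less_slope) (use up in simp)
  moreover have "Max S - (Min S - 1) = Max S + 1 - Min S"
    using \<open>0 < Min S\<close> Min_le[OF S(1) Max_in[OF S(1,2)]] by linarith
  ultimately show "Max S + 1 - Min S \<in> S" by simp
qed

lemma franklin_up_shape:
  assumes S: "finite S" "S \<noteq> {}" "0 \<notin> S" "\<not> franklin_exceptional S" and up: "Min S \<le> slope S"
  defines "T \<equiv> franklin S"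
  shows "Max T = Max S + 1" "slope T = Min S" "Min S < Min T"
proof -
  define M s where "M = Max S" and "s = Min S"
  note bounds = franklin_up_bounds[OF S up, folded M_def s_def]
  have T: "T = insert (M + 1) (S - {s, M + 1 - s})"
    unfolding T_def franklin_def M_def s_def using up by simp
  have finT: "finite T" using S(1) T by simp
  have le_M: "y \<le> M" if "y \<in> S" for y using S(1) that M_def by simp
  have s_le: "s \<le> y" if "y \<in> S" for y using S(1) that s_def by simp
  have s_pos: "0 < s" using Min_in[OF S(1,2)] S(3) s_def by (cases s) auto
  show MT: "Max T = M + 1"
    by (rule Max_eqI[OF finT]) (use T le_M in fastforce)+
  show "slope T = s"
  proof (rule slope_eqI)
    show "Max T - j \<in> T" if "j < s" for j
    proof (cases j)
      case (Suc i)
      then have "M - i \<in> S" using Max_minus_in_if_less_slope[of i S] that up M_def s_def by simp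
      moreover have "M - i \<noteq> s" "M - i \<noteq> M + 1 - s" using Suc that bounds(1) by auto
      moreover have "Max T - j = M - i" using MT Suc by simp
      ultimately show ?thesis unfolding T by simp
    next
      case 0
      have "M + 1 \<in> T" using T by simp
      then show ?thesis using MT 0 by simp
    qed
    show "Max T - s \<notin> T" using MT T s_pos by auto
  qed
  have "s < y" if "y \<in> T" for y
  proof -
    from that consider "y = M + 1" | "y \<in> S" "y \<noteq> s" unfolding T by auto
    then show ?thesis using s_le[of y] bounds(1) by cases auto
  qed
  then show "s < Min T" using finT T by simp
qed

lemma franklin_up:
  assumes S: "finite S" "S \<noteq> {}" "0 \<notin> S" "\<not> franklin_exceptional S" and up: "Min S \<le> slope S"
  defines "T \<equiv> franklin S"
  shows "finite T" "T \<noteq> {}" "0 \<notin> T" "\<Sum>T = \<Sum>S" "\<not> franklin_exceptional T" "franklin T = S"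
    "T \<noteq> S"
proof -
  define M s where "M = Max S" and "s = Min S"
  note bounds = franklin_up_bounds[OF S up, folded M_def s_def]
  note shape = franklin_up_shape[OF S up, folded T_def M_def s_def]
  have T: "T = insert (M + 1) (S - {s, M + 1 - s})"
    unfolding T_def franklin_def M_def s_def using up by simp
  have M1: "M + 1 \<notin> S" using S(1) M_def by (auto dest: Max_ge)
  show "finite T" "T \<noteq> {}" "0 \<notin> T" "T \<noteq> S" using S(1,3) T M1 by auto
  show "\<not> franklin_exceptional T"
    using shape bounds unfolding franklin_exceptional_def by auto
  have "franklin T = insert s (insert (M + 1 - s) (T - {M + 1}))"
    unfolding franklin_def using shape by simp
  also have "\<dots> = S" using T M1 Min_in[OF S(1,2)] bounds(2) s_def by auto
  finally show "franklin T = S" .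
  have s_in: "s \<in> S" using Min_in[OF S(1,2)] s_def by simp
  have "\<Sum>S = s + \<Sum>(S - {s})" using S(1) s_in by (simp add: sum.remove)
  also have "\<Sum>(S - {s}) = (M + 1 - s) + \<Sum>(S - {s} - {M + 1 - s})"
    using S(1) bounds by (subst sum.remove[of _ "M + 1 - s"]) auto
  finally have "\<Sum>S = s + (M + 1 - s) + \<Sum>(S - {s, M + 1 - s})"
    by (simp add: Diff_insert2[symmetric] insert_commute)
  moreover have "\<Sum>T = (M + 1) + \<Sum>(S - {s, M + 1 - s})" using T S(1) M1 by simp
  ultimately show "\<Sum>T = \<Sum>S" using bounds(1) by simp
qed

lemma franklin_down_bounds:
  assumes S: "finite S" "S \<noteq> {}" "0 \<notin> S" "\<not> franklin_exceptional S" and down: "slope S < Min S"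
  shows "slope S < Max S - slope S"
proof -
  have top: "Min S \<le> Max S + 1 - slope S"
    using Max_plus_one_minus_slope_in[OF S(1-3)] S(1) by simp
  show ?thesis
  proof (cases "Min S = Max S + 1 - slope S")
    case True
    then have "slope S + 1 < Min S" using S(2,4) down unfolding franklin_exceptional_def by auto
    then show ?thesis using True slope_le_Max[OF S(3)] by linarith
  qed (use top down in linarith)
qed

lemma franklin_down_shape:
  assumes S: "finite S" "S \<noteq> {}" "0 \<notin> S" "\<not> franklin_exceptional S" and down: "slope S < Min S"
  defines "T \<equiv> franklin S"
  shows "Max T = Max S - 1" "Min T = slope S" "slope S \<le> slope T"
proof -
  define M d where "M = Max S" and "d = slope S"
  note bound = franklin_down_bounds[OF S down, folded M_def d_def]
  have T: "T = insert d (insert (M - d) (S - {M}))"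
    unfolding T_def franklin_def M_def d_def using down by simp
  have finT: "finite T" using S(1) T by simp
  have le_M: "y \<le> M" if "y \<in> S" for y using S(1) that M_def by simp
  have d_pos: "0 < d" using slope_pos[OF S(1-3)] d_def by simp
  have d_less: "d < y" if "y \<in> S" for y using Min_le[OF S(1) that] down d_def by simp
  show MT: "Max T = M - 1"
  proof (rule Max_eqI[OF finT])
    show "y \<le> M - 1" if "y \<in> T" for y
    proof -
      from that consider "y = d" | "y = M - d" | "y \<in> S" "y \<noteq> M" unfolding T by auto
      then show ?thesis using bound d_pos le_M[of y] by cases auto
    qed
    show "M - 1 \<in> T"
    proof (cases "d = 1")
      case False
      then have "M - 1 \<in> S" using Max_minus_in_if_less_slope[of 1 S] d_pos M_def d_def by simp
      moreover have "M - 1 \<noteq> M" using bound by linarith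
      ultimately show ?thesis unfolding T by simp
    qed (simp add: T)
  qed
  show "Min T = d"
    by (rule Min_eqI[OF finT]) (use T d_less bound in \<open>auto intro: less_imp_le\<close>)
  have "Max T - j \<in> T" if "j < d" for j
  proof (cases "Suc j = d")
    case False
    then have "M - Suc j \<in> S"
      using Max_minus_in_if_less_slope[of "Suc j" S] that M_def d_def by simp
    moreover have "M - Suc j \<noteq> M" using bound by simp
    moreover have "Max T - j = M - Suc j" using MT by simp
    ultimately show ?thesis unfolding T by simp
  qed (use MT T bound in simp)
  moreover have "0 \<notin> T" using S(3) d_pos bound unfolding T by auto
  ultimately show "d \<le> slope T" using Max_minus_slope_notin[of T] not_less by blast
qed

lemma franklin_down:
  assumes S: "finite S" "S \<noteq> {}" "0 \<notin> S" "\<not> franklin_exceptional S" and down: "slope S < Min S"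
  defines "T \<equiv> franklin S"
  shows "finite T" "T \<noteq> {}" "0 \<notin> T" "\<Sum>T = \<Sum>S" "\<not> franklin_exceptional T" "franklin T = S"
    "T \<noteq> S"
proof -
  define M d where "M = Max S" and "d = slope S"
  note bound = franklin_down_bounds[OF S down, folded M_def d_def]
  note shape = franklin_down_shape[OF S down, folded T_def M_def d_def]
  have T: "T = insert d (insert (M - d) (S - {M}))"
    unfolding T_def franklin_def M_def d_def using down by simp
  have d_pos: "0 < d" using slope_pos[OF S(1-3)] d_def by simp
  have d_notin: "d \<notin> S" using Min_le[OF S(1)] down d_def by fastforce
  have Md_notin: "M - d \<notin> S" using Max_minus_slope_notin[OF S(3)] M_def d_def by simp
  have M_in: "M \<in> S" using Max_in[OF S(1,2)] M_def by simp
  show "finite T" "T \<noteq> {}" "0 \<notin> T" "T \<noteq> S" using S(1,3) T d_pos bound d_notin by auto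
  show "\<not> franklin_exceptional T"
    using shape bound unfolding franklin_exceptional_def by auto
  have "franklin T = insert M (T - {d, M - d})"
    unfolding franklin_def using shape bound by simp
  also have "\<dots> = S" using T M_in d_notin Md_notin bound by auto
  finally show "franklin T = S" .
  have "\<Sum>S = M + \<Sum>(S - {M})" using S(1) M_in by (simp add: sum.remove)
  moreover have "\<Sum>T = d + ((M - d) + \<Sum>(S - {M}))" using T S(1) d_notin Md_notin bound by simp
  ultimately show "\<Sum>T = \<Sum>S" using bound by simp
qed

lemma franklin_involution:
  assumes "S \<in> distinct_parts k" "S \<noteq> {}" "\<not> franklin_exceptional S"
  shows "franklin S \<in> distinct_parts k" "franklin S \<noteq> {}" "\<not> franklin_exceptional (franklin S)"
    "franklin (franklin S) = S" "franklin S \<noteq> S"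
proof -
  have S: "finite S" "S \<noteq> {}" "0 \<notin> S" "\<not> franklin_exceptional S" "\<Sum>S = k"
    using assms unfolding distinct_parts_def by auto
  let ?T = "franklin S"
  consider "Min S \<le> slope S" | "slope S < Min S" by linarith
  then have "finite ?T \<and> ?T \<noteq> {} \<and> 0 \<notin> ?T \<and> \<Sum>?T = \<Sum>S \<and> \<not> franklin_exceptional ?T
      \<and> franklin ?T = S \<and> ?T \<noteq> S"
    by cases (use franklin_up[OF S(1-4)] franklin_down[OF S(1-4)] in blast)+
  then show "?T \<in> distinct_parts k" "?T \<noteq> {}" "\<not> franklin_exceptional ?T" "franklin ?T = S" "?T \<noteq> S"
    using S(5) unfolding distinct_parts_def by simp_all
qed

definition pentagonal_set :: "int \<Rightarrow> nat set" where
  "pentagonal_set z =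
     (if 0 \<le> z then {nat z..<2 * nat z} else {nat (- z) + 1..<2 * nat (- z) + 1})"

lemma pentagonal_set_cases:
  obtains n where "z = int n" "pentagonal_set z = {n..<n + n}"
  | n where "z = - int n" "0 < n" "pentagonal_set z = {n + 1..<(n + 1) + n}"
proof (cases "0 \<le> z")
  case True
  then show ?thesis using that(1)[of "nat z"] unfolding pentagonal_set_def by (simp add: mult_2)
next
  case False
  then show ?thesis using that(2)[of "nat (- z)"] unfolding pentagonal_set_def by (simp add: mult_2)
qed

lemma double_sum_interval: "2 * int (\<Sum>{a..<a + n}) = int n * (2 * int a + int n - 1)"
  by (induction n) (simp_all add: algebra_simps)

lemma double_sum_pentagonal_set: "2 * int (\<Sum>(pentagonal_set z)) = z * (3 * z - 1)"
proof (cases z rule: pentagonal_set_cases)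
  case (1 n)
  then show ?thesis using double_sum_interval[of n n] by (simp add: algebra_simps)
next
  case (2 n)
  then show ?thesis using double_sum_interval[of "n + 1" n] by (simp add: algebra_simps)
qed

lemma finite_pentagonal_set: "finite (pentagonal_set z)"
  unfolding pentagonal_set_def by simp

lemma pentagonal_set_pos: "0 \<notin> pentagonal_set z"
  by (cases z rule: pentagonal_set_cases) auto

lemma interval_Min_Max_slope:
  assumes "0 < a" "0 < n"
  shows "Min {a..<a + n} = a" "Max {a..<a + n} = a + n - 1" "slope {a..<a + n} = n"
proof -
  show "Min {a..<a + n} = a" using assms by (intro Min_eqI) auto
  show Max: "Max {a..<a + n} = a + n - 1" using assms by (intro Max_eqI) auto
  show "slope {a..<a + n} = n" by (rule slope_eqI) (use Max assms in auto)
qed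

lemma franklin_exceptional_pentagonal_set:
  assumes "z \<noteq> 0"
  shows "franklin_exceptional (pentagonal_set z)"
proof (cases z rule: pentagonal_set_cases)
  case (1 n)
  then show ?thesis using assms interval_Min_Max_slope[of n n]
    unfolding franklin_exceptional_def by auto
next
  case (2 n)
  then show ?thesis using interval_Min_Max_slope[of "n + 1" n]
    unfolding franklin_exceptional_def by auto
qed

lemma franklin_exceptional_imp_pentagonal_set:
  assumes S: "finite S" "0 \<notin> S" "franklin_exceptional S"
  obtains z where "S = pentagonal_set z"
proof -
  define M s d where "M = Max S" and "s = Min S" and "d = slope S"
  have ne: "S \<noteq> {}" using S(3) unfolding franklin_exceptional_def by simp
  have exc: "s = M + 1 - d" "s = d \<or> s = d + 1"
    using S(3) unfolding franklin_exceptional_def M_def s_def d_def by auto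
  have d_le: "d \<le> M" using slope_le_Max[OF S(2)] M_def d_def by simp
  have top: "s + d = M + 1" using exc(1) d_le by simp
  have interval: "S = {s..<s + d}"
  proof (intro set_eqI iffI)
    fix y assume "y \<in> S"
    then show "y \<in> {s..<s + d}"
      using Min_le[OF S(1)] Max_ge[OF S(1)] top unfolding M_def s_def by fastforce
  next
    fix y assume y: "y \<in> {s..<s + d}"
    then have "M - y < d" using top by auto
    then have "M - (M - y) \<in> S" using Max_minus_in_if_less_slope M_def d_def by simp
    moreover have "M - (M - y) = y" using y top by auto
    ultimately show "y \<in> S" by simp
  qed
  from exc(2) show ?thesis
  proof
    assume "s = d"
    then show ?thesis using that[of "int d"] interval unfolding pentagonal_set_def
      by (simp add: mult_2)
  next
    assume "s = d + 1"
    moreover have "0 < d" using slope_pos[OF S(1) ne S(2)] d_def by simp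
    ultimately show ?thesis using that[of "- int d"] interval
      unfolding pentagonal_set_def by (simp add: mult_2)
  qed
qed

lemma finite_distinct_parts: "finite (distinct_parts k)"
proof (rule finite_subset)
  show "distinct_parts k \<subseteq> Pow {0..k}"
    unfolding distinct_parts_def using member_le_sum[of _ _ "\<lambda>x. x"] by fastforce
qed simp

lemma pentagonal_number_inj:
  fixes z w :: int
  assumes "z * (3 * z - 1) = w * (3 * w - 1)"
  shows "z = w"
proof -
  have "(z - w) * (3 * (z + w) - 1) = 0" using assms by (simp add: algebra_simps)
  moreover have "3 * (z + w) - 1 \<noteq> 0" by presburger
  ultimately show ?thesis by simp
qed

lemma pentagonal_set_eq_empty_iff: "pentagonal_set z = {} \<longleftrightarrow> z = 0"
  unfolding pentagonal_set_def by auto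

lemma franklin_fixed_iff_pentagonal_set:
  assumes "finite S" "0 \<notin> S"
  shows "S = {} \<or> franklin_exceptional S \<longleftrightarrow> (\<exists>z. S = pentagonal_set z)"
proof
  assume "S = {} \<or> franklin_exceptional S"
  then show "\<exists>z. S = pentagonal_set z"
  proof
    assume "S = {}"
    then show ?thesis using pentagonal_set_eq_empty_iff by blast
  qed (use franklin_exceptional_imp_pentagonal_set[OF assms] in blast)
next
  assume "\<exists>z. S = pentagonal_set z"
  then show "S = {} \<or> franklin_exceptional S"
    using franklin_exceptional_pentagonal_set pentagonal_set_eq_empty_iff by blast
qed

lemma franklin_fixed_eq_image_pentagonal_set:
  "{S \<in> distinct_parts k. S = {} \<or> franklin_exceptional S}
    = pentagonal_set ` {z. 2 * int k = z * (3 * z - 1)}"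
proof (intro set_eqI iffI)
  fix S assume "S \<in> {S \<in> distinct_parts k. S = {} \<or> franklin_exceptional S}"
  then have S: "finite S" "0 \<notin> S" "\<Sum>S = k" "S = {} \<or> franklin_exceptional S"
    unfolding distinct_parts_def by auto
  then obtain z where z: "S = pentagonal_set z" using franklin_fixed_iff_pentagonal_set by blast
  moreover have "2 * int k = z * (3 * z - 1)"
    using double_sum_pentagonal_set[of z] S(3) z by (simp del: of_nat_sum)
  ultimately show "S \<in> pentagonal_set ` {z. 2 * int k = z * (3 * z - 1)}" by blast
next
  fix S assume "S \<in> pentagonal_set ` {z. 2 * int k = z * (3 * z - 1)}"
  then obtain z where z: "S = pentagonal_set z" "2 * int k = z * (3 * z - 1)" by blast
  have "int (\<Sum>S) = int k" using double_sum_pentagonal_set[of z] z by (simp del: of_nat_sum)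
  then have "\<Sum>S = k" by (simp only: of_nat_eq_iff)
  moreover have "S = {} \<or> franklin_exceptional S"
    using franklin_exceptional_pentagonal_set pentagonal_set_eq_empty_iff z(1) by blast
  ultimately show "S \<in> {S \<in> distinct_parts k. S = {} \<or> franklin_exceptional S}"
    using z(1) pentagonal_set_pos[of z] finite_pentagonal_set[of z] unfolding distinct_parts_def
    by simp
qed

lemma card_franklin_fixed:
  "card {S \<in> distinct_parts k. S = {} \<or> franklin_exceptional S}
    = (if gen_pentagonal k then 1 else 0)"
proof (cases "gen_pentagonal k")
  case True
  then obtain z where z: "2 * int k = z * (3 * z - 1)" unfolding gen_pentagonal_def by blast
  have roots: "{w. 2 * int k = w * (3 * w - 1)} = {z}"
  proof (intro set_eqI iffI)
    fix w assume "w \<in> {w. 2 * int k = w * (3 * w - 1)}"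
    then have "w * (3 * w - 1) = z * (3 * z - 1)" using z by simp
    then show "w \<in> {z}" using pentagonal_number_inj by blast
  qed (use z in simp)
  show ?thesis unfolding franklin_fixed_eq_image_pentagonal_set roots using True by simp
next
  case False
  then have roots: "{w. 2 * int k = w * (3 * w - 1)} = {}" unfolding gen_pentagonal_def by auto
  show ?thesis unfolding franklin_fixed_eq_image_pentagonal_set roots using False by simp
qed

lemma odd_card_distinct_parts_iff: "odd (card (distinct_parts k)) \<longleftrightarrow> gen_pentagonal k"
proof -
  define h where "h S = (if S = {} \<or> franklin_exceptional S then S else franklin S)" for S
  have "even (card (distinct_parts k)) \<longleftrightarrow> even (card {S \<in> distinct_parts k. h S = S})"
    by (rule even_card_iff_even_card_fixpoints[OF finite_distinct_parts])
      (use franklin_involution in \<open>auto simp: h_def\<close>)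
  also have "{S \<in> distinct_parts k. h S = S}
      = {S \<in> distinct_parts k. S = {} \<or> franklin_exceptional S}"
    using franklin_involution(5) unfolding h_def by auto
  finally show ?thesis using card_franklin_fixed[of k] by auto
qed

section \<open>Euler's pentagonal recurrence modulo 2\<close>

definition mpartitions :: "nat \<Rightarrow> nat multiset set" where
  "mpartitions n = {L. 0 \<notin># L \<and> sum_mset L = n}"

definition partition_number :: "nat \<Rightarrow> nat" where
  "partition_number n = card (mpartitions n)"

lemma length_le_sum_list: "\<forall>x\<in>set xs. 0 < (x::nat) \<Longrightarrow> length xs \<le> sum_list xs"
  by (induction xs) auto

lemma finite_partitions: "finite (partitions n)"
proof (rule finite_subset)
  show "partitions n \<subseteq> {xs. set xs \<subseteq> {0..n} \<and> length xs \<le> n}"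
    unfolding partitions_def using length_le_sum_list member_le_sum_list by fastforce
  show "finite {xs. set xs \<subseteq> {0..n} \<and> length xs \<le> n}"
    by (rule finite_lists_length_le) simp
qed

lemma inj_on_mset_partitions: "inj_on mset (partitions n)"
proof
  fix xs ys assume xs: "xs \<in> partitions n" and ys: "ys \<in> partitions n" and eq: "mset xs = mset ys"
  have "sort (rev xs) = rev ys"
    by (rule properties_for_sort) (use eq ys partitions_def in auto)
  moreover have "sort (rev xs) = rev xs" using xs partitions_def sorted_sort_id by auto
  ultimately show "xs = ys" by simp
qed

lemma mset_partitions: "mset ` partitions n = mpartitions n"
proof
  show "mset ` partitions n \<subseteq> mpartitions n"
    unfolding partitions_def mpartitions_def by (auto simp: sum_mset_sum_list)
  show "mpartitions n \<subseteq> mset ` partitions n"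
  proof
    fix L assume L: "L \<in> mpartitions n"
    define xs where "xs = rev (sorted_list_of_multiset L)"
    have "mset xs = L" unfolding xs_def by simp
    moreover have "xs \<in> partitions n"
      using L \<open>mset xs = L\<close> unfolding partitions_def mpartitions_def xs_def
      by (auto simp flip: sum_mset_sum_list intro!: gr0I)
    ultimately show "L \<in> mset ` partitions n" by blast
  qed
qed

lemma finite_mpartitions: "finite (mpartitions n)"
  using finite_partitions mset_partitions by (metis finite_imageI)

lemma card_partitions_filter_mset:
  "card {xs \<in> partitions n. P (mset xs)} = card {L \<in> mpartitions n. P L}"
proof -
  have "mset ` {xs \<in> partitions n. P (mset xs)} = {L \<in> mpartitions n. P L}"
    unfolding mset_partitions[symmetric] by auto
  moreover have "inj_on mset {xs \<in> partitions n. P (mset xs)}"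
    by (rule inj_on_subset[OF inj_on_mset_partitions]) auto
  ultimately show ?thesis by (metis card_image)
qed

lemma partition_number_0: "partition_number 0 = 1"
proof -
  have "mpartitions 0 = {{#}}" unfolding mpartitions_def
    by (auto simp: sum_mset_0_iff) (metis all_not_in_conv set_mset_eq_empty_iff)
  then show ?thesis unfolding partition_number_def by simp
qed

definition move_least_part :: "nat multiset \<times> nat set \<Rightarrow> nat multiset \<times> nat set" where
  "move_least_part = (\<lambda>(L, S). let m = Min (set_mset L \<union> S) in
     if m \<in> S then (add_mset m L, S - {m}) else (L - {#m#}, insert m S))"

lemma move_least_part_eq:
  assumes "Min (set_mset L \<union> S) = m"
  shows "move_least_part (L, S)
    = (if m \<in> S then (add_mset m L, S - {m}) else (L - {#m#}, insert m S))"
  using assms unfolding move_least_part_def by simp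

lemma move_least_part_involution:
  assumes L: "0 \<notin># L" and S: "finite S" "0 \<notin> S" and ne: "set_mset L \<union> S \<noteq> {}"
  obtains L' S' where "move_least_part (L, S) = (L', S')" "0 \<notin># L'" "finite S'" "0 \<notin> S'"
    "sum_mset L' + \<Sum>S' = sum_mset L + \<Sum>S" "move_least_part (L', S') = (L, S)" "(L', S') \<noteq> (L, S)"
proof -
  define m where "m = Min (set_mset L \<union> S)"
  have m_in: "m \<in> set_mset L \<union> S" unfolding m_def using S(1) ne by (intro Min_in) auto
  have m_pos: "0 < m" using m_in L S(2) by (auto intro: gr0I)
  show ?thesis
  proof (cases "m \<in> S")
    case True
    have "set_mset (add_mset m L) \<union> (S - {m}) = set_mset L \<union> S" using True by auto
    then have "Min (set_mset (add_mset m L) \<union> (S - {m})) = m" unfolding m_def by simp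
    note undo = move_least_part_eq[OF this]
    show ?thesis
    proof (rule that)
      show "move_least_part (L, S) = (add_mset m L, S - {m})"
        using move_least_part_eq[OF m_def[symmetric]] True by simp
      show "move_least_part (add_mset m L, S - {m}) = (L, S)"
        using undo True by (simp add: insert_absorb)
      show "sum_mset (add_mset m L) + \<Sum>(S - {m}) = sum_mset L + \<Sum>S"
        using True S(1) by (simp add: sum.remove)
    qed (use L S True m_pos in auto)
  next
    case False
    then have "m \<in># L" using m_in by simp
    then obtain L' where L': "L = add_mset m L'" by (metis multi_member_split)
    have "set_mset L' \<union> insert m S = set_mset L \<union> S" using L' by auto
    then have "Min (set_mset L' \<union> insert m S) = m" unfolding m_def by simp
    note undo = move_least_part_eq[OF this]
    show ?thesis
    proof (rule that)
      show "move_least_part (L, S) = (L', insert m S)"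
        using move_least_part_eq[OF m_def[symmetric]] False L' by simp
      show "move_least_part (L', insert m S) = (L, S)"
        using undo False L' by simp
      show "sum_mset L' + \<Sum>(insert m S) = sum_mset L + \<Sum>S"
        using False S(1) L' by simp
    qed (use L L' S False m_pos in auto)
  qed
qed

lemma even_sum_partition_number_mult_card_distinct_parts:
  assumes "0 < M"
  shows "even (\<Sum>i\<le>M. partition_number i * card (distinct_parts (M - i)))"
proof -
  define X where "X = (\<Union>i\<le>M. mpartitions i \<times> distinct_parts (M - i))"
  have X_iff: "(L, S) \<in> X \<longleftrightarrow> 0 \<notin># L \<and> finite S \<and> 0 \<notin> S \<and> sum_mset L + \<Sum>S = M" for L S
    unfolding X_def mpartitions_def distinct_parts_def by force
  have "card X = (\<Sum>i\<le>M. partition_number i * card (distinct_parts (M - i)))"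
    unfolding X_def partition_number_def
    by (subst card_UN_disjoint)
      (auto simp: finite_mpartitions[unfolded mpartitions_def] finite_distinct_parts
        card_cartesian_product mpartitions_def)
  moreover have "even (card X)"
  proof (rule even_card_involution[where h = move_least_part])
    fix p assume "p \<in> X"
    then obtain L S where p: "p = (L, S)" and L: "0 \<notin># L" and S: "finite S" "0 \<notin> S"
      and sum: "sum_mset L + \<Sum>S = M"
      using X_iff by (cases p) blast
    have "set_mset L \<union> S \<noteq> {}" using sum assms by auto
    then obtain L' S' where "move_least_part (L, S) = (L', S')" "0 \<notin># L'" "finite S'" "0 \<notin> S'"
      "sum_mset L' + \<Sum>S' = sum_mset L + \<Sum>S" "move_least_part (L', S') = (L, S)" "(L', S') \<noteq> (L, S)"
      using move_least_part_involution[OF L S] by blast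
    then show "move_least_part p \<in> X" "move_least_part (move_least_part p) = p"
      "move_least_part p \<noteq> p"
      unfolding p using X_iff sum by auto
  qed
  ultimately show ?thesis by simp
qed

lemma of_nat_card_distinct_parts:
  "(of_nat (card (distinct_parts k)) :: bit) = of_bool (gen_pentagonal k)"
  using odd_card_distinct_parts_iff[of k] by (simp add: of_nat_bit_eq)

lemma pentagonal_recurrence_mod2:
  "(\<Sum>g\<le>M. of_bool (gen_pentagonal g) * (of_nat (partition_number (M - g)) :: bit))
    = of_bool (M = 0)"
proof (cases "M = 0")
  case True
  have "gen_pentagonal 0" unfolding gen_pentagonal_def by (rule exI[of _ 0]) simp
  then show ?thesis using True partition_number_0 by simp
next
  case False
  have "(\<Sum>g\<le>M. of_bool (gen_pentagonal g) * (of_nat (partition_number (M - g)) :: bit))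
      = (\<Sum>i\<le>M. of_nat (partition_number i) * of_bool (gen_pentagonal (M - i)))"
    by (subst sum.atLeastAtMost_rev[of _ 0 M, simplified atLeast0AtMost])
      (rule sum.cong; simp add: mult.commute)
  also have "\<dots> = of_nat (\<Sum>i\<le>M. partition_number i * card (distinct_parts (M - i)))"
    by (simp only: of_nat_sum of_nat_mult of_nat_card_distinct_parts)
  also have "\<dots> = 0"
    using even_sum_partition_number_mult_card_distinct_parts[of M] False
    by (simp add: of_nat_bit_eq)
  finally show ?thesis using False by simp
qed

section \<open>The mex statistic\<close>

definition mex_index :: "nat \<Rightarrow> nat \<Rightarrow> nat multiset \<Rightarrow> nat" where
  "mex_index t A L = (LEAST i. t + i * A \<notin># L)"

definition progression_sum :: "nat \<Rightarrow> nat \<Rightarrow> nat \<Rightarrow> nat" where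
  "progression_sum t A j = (\<Sum>i<j. t + i * A)"

lemma mem_le_sum_mset: "x \<in># L \<Longrightarrow> x \<le> sum_mset (L :: nat multiset)"
  by (metis le_add1 multi_member_split sum_mset.add_mset)

lemma progression_term_notin:
  fixes t A :: nat
  assumes "0 < t" "0 < A"
  shows "t + sum_mset L * A \<notin># L"
proof
  assume "t + sum_mset L * A \<in># L"
  then have "t + sum_mset L * A \<le> sum_mset L" by (rule mem_le_sum_mset)
  moreover have "sum_mset L \<le> sum_mset L * A" using assms(2) by simp
  ultimately show False using assms(1) by linarith
qed

lemma mex_index_le_sum_mset:
  assumes "0 < t" "0 < A"
  shows "mex_index t A L \<le> sum_mset L"
  unfolding mex_index_def by (rule Least_le) (rule progression_term_notin[OF assms])

lemma progression_term_mex_index_notin: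
  assumes "0 < t" "0 < A"
  shows "t + mex_index t A L * A \<notin># L"
  unfolding mex_index_def by (rule LeastI) (rule progression_term_notin[OF assms])

lemma le_mex_index_iff:
  assumes "0 < t" "0 < A"
  shows "j \<le> mex_index t A L \<longleftrightarrow> (\<forall>i<j. t + i * A \<in># L)"
proof
  assume "j \<le> mex_index t A L"
  show "\<forall>i<j. t + i * A \<in># L"
  proof (intro allI impI)
    fix i assume "i < j"
    with \<open>j \<le> mex_index t A L\<close> have "i < (LEAST i. t + i * A \<notin># L)"
      unfolding mex_index_def by simp
    then show "t + i * A \<in># L" by (blast dest: not_less_Least)
  qed
next
  assume "\<forall>i<j. t + i * A \<in># L"
  then show "j \<le> mex_index t A L"
    using progression_term_mex_index_notin[OF assms] not_le by blast
qed

lemma pos_mod_eq_iff_progression: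
  fixes k t A :: nat
  assumes "0 < t" "t \<le> A"
  shows "0 < k \<and> k mod A = t mod A \<longleftrightarrow> (\<exists>i. k = t + i * A)"
proof
  assume k: "0 < k \<and> k mod A = t mod A"
  show "\<exists>i. k = t + i * A"
  proof (cases "t < A")
    case True
    then have "k = t + (k div A) * A" using k div_mult_mod_eq[of k A] by simp
    then show ?thesis by blast
  next
    case False
    then have k_eq: "k = k div A * A" "t = A" using k assms div_mult_mod_eq[of k A] by auto
    then obtain q where "k div A = Suc q" using k by (metis mult_0 not0_implies_Suc not_gr0)
    then have "k = t + q * A" using k_eq by simp
    then show ?thesis by blast
  qed
qed (use assms in auto)

lemma progression_mod_double_eq_iff:
  fixes t A i :: nat
  assumes "0 < A"
  shows "(t + i * A) mod (2 * A) = t mod (2 * A) \<longleftrightarrow> even i"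
proof -
  have "(t + i * A) mod (2 * A) = t mod (2 * A) \<longleftrightarrow> 2 * A dvd i * A"
    using mod_eq_dvd_iff_nat[of t "t + i * A" "2 * A"] by auto
  also have "\<dots> \<longleftrightarrow> even i" using assms by simp
  finally show ?thesis .
qed

lemma mex_eq_mex_index:
  assumes "0 < t" "t \<le> A"
  shows "mex A t xs = t + mex_index t A (mset xs) * A"
  unfolding mex_def
proof (rule Least_equality)
  show "0 < t + mex_index t A (mset xs) * A \<and> (t + mex_index t A (mset xs) * A) mod A = t mod A
      \<and> t + mex_index t A (mset xs) * A \<notin> set xs"
    using progression_term_mex_index_notin[of t A "mset xs"] assms by simp
next
  fix k assume k: "0 < k \<and> k mod A = t mod A \<and> k \<notin> set xs"
  then obtain i where i: "k = t + i * A" using pos_mod_eq_iff_progression[OF assms] by blast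
  then have "\<not> Suc i \<le> mex_index t A (mset xs)"
    using le_mex_index_iff[of t A "Suc i" "mset xs"] k assms by auto
  then show "t + mex_index t A (mset xs) * A \<le> k" using i by simp
qed

lemma p_mex_eq_card_even_mex_index:
  assumes "0 < t" "t \<le> A"
  shows "p_mex A t n = card {L \<in> mpartitions n. even (mex_index t A L)}"
proof -
  have "mex A t xs mod (2 * A) = t mod (2 * A) \<longleftrightarrow> even (mex_index t A (mset xs))" for xs
    unfolding mex_eq_mex_index[OF assms]
    using progression_mod_double_eq_iff[of A t "mex_index t A (mset xs)"] assms by simp
  then show ?thesis unfolding p_mex_def using card_partitions_filter_mset by simp
qed

lemma sum_card_le_eq:
  assumes "finite X" "\<And>x. x \<in> X \<Longrightarrow> f x \<le> n"
  shows "(\<Sum>j\<le>n. card {x \<in> X. j \<le> f x}) = (\<Sum>x\<in>X. f x + 1)"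
proof -
  have "(\<Sum>j\<le>n. card {x \<in> X. j \<le> f x}) = (\<Sum>j\<le>n. \<Sum>x\<in>X. of_bool (j \<le> f x))"
    using assms(1) by (simp add: Int_def conj_commute)
  also have "\<dots> = (\<Sum>x\<in>X. \<Sum>j\<le>n. of_bool (j \<le> f x))" by (rule sum.swap)
  also have "\<dots> = (\<Sum>x\<in>X. f x + 1)"
  proof (rule sum.cong[OF refl])
    fix x assume "x \<in> X"
    then have "{..n} \<inter> {j. j \<le> f x} = {..f x}" using assms(2)[of x] by auto
    then show "(\<Sum>j\<le>n. of_bool (j \<le> f x)) = f x + 1" by simp
  qed
  finally show ?thesis .
qed

lemma card_mpartitions_supset:
  assumes "0 \<notin># D"
  shows "card {L \<in> mpartitions n. D \<subseteq># L}
    = (if sum_mset D \<le> n then partition_number (n - sum_mset D) else 0)"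
proof (cases "sum_mset D \<le> n")
  case True
  have "{L \<in> mpartitions n. D \<subseteq># L} = (+) D ` mpartitions (n - sum_mset D)"
  proof (intro set_eqI iffI)
    fix L assume L: "L \<in> {L \<in> mpartitions n. D \<subseteq># L}"
    then obtain C where C: "L = D + C" by (auto simp: mset_subset_eq_exists_conv)
    then have "C \<in> mpartitions (n - sum_mset D)" using L unfolding mpartitions_def by auto
    then show "L \<in> (+) D ` mpartitions (n - sum_mset D)" using C by blast
  next
    fix L assume "L \<in> (+) D ` mpartitions (n - sum_mset D)"
    then show "L \<in> {L \<in> mpartitions n. D \<subseteq># L}" using True assms unfolding mpartitions_def by auto
  qed
  moreover have "inj_on ((+) D) (mpartitions (n - sum_mset D))" by (simp add: inj_on_def)
  ultimately show ?thesis using True unfolding partition_number_def by (simp add: card_image)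
next
  case False
  have empty: "{L \<in> mpartitions n. D \<subseteq># L} = {}"
    using False unfolding mpartitions_def by (auto simp: mset_subset_eq_exists_conv)
  show ?thesis unfolding empty using False by simp
qed

lemma mset_set_subseteq_iff:
  assumes "finite T"
  shows "mset_set T \<subseteq># L \<longleftrightarrow> T \<subseteq> set_mset L"
proof
  assume "mset_set T \<subseteq># L"
  then show "T \<subseteq> set_mset L" using set_mset_mono assms by fastforce
next
  assume "T \<subseteq> set_mset L"
  then have "mset_set T \<subseteq># mset_set (set_mset L)" by (simp add: subset_imp_msubset_mset_set)
  then show "mset_set T \<subseteq># L" using mset_set_set_mset_msubset subset_mset.order_trans by blast
qed

lemma card_mpartitions_le_mex_index:
  assumes "0 < t" "0 < A"
  shows "card {L \<in> mpartitions n. j \<le> mex_index t A L}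
    = (if progression_sum t A j \<le> n then partition_number (n - progression_sum t A j) else 0)"
proof -
  define D where "D = mset_set ((\<lambda>i. t + i * A) ` {..<j})"
  have "sum_mset D = \<Sum>((\<lambda>i. t + i * A) ` {..<j})"
    unfolding D_def by (simp add: sum_unfold_sum_mset)
  also have "\<dots> = progression_sum t A j"
    unfolding progression_sum_def using assms(2) by (simp add: sum.reindex inj_on_def)
  finally have "sum_mset D = progression_sum t A j" .
  moreover have "j \<le> mex_index t A L \<longleftrightarrow> D \<subseteq># L" for L
    unfolding le_mex_index_iff[OF assms] D_def by (auto simp: mset_set_subseteq_iff)
  moreover have "0 \<notin># D" using assms(1) unfolding D_def by auto
  ultimately show ?thesis using card_mpartitions_supset[of D n] by simp
qed

lemma p_mex_mod2:
  assumes "0 < t" "t \<le> A"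
  shows "(of_nat (p_mex A t n) :: bit) = (\<Sum>j\<le>n. of_bool (progression_sum t A j \<le> n)
     * of_nat (partition_number (n - progression_sum t A j)))"
proof -
  have A: "0 < A" using assms by simp
  have "even (\<Sum>L\<in>mpartitions n. mex_index t A L + 1) \<longleftrightarrow> even (p_mex A t n)"
    using even_sum_iff[OF finite_mpartitions, of "\<lambda>L. mex_index t A L + 1"]
      p_mex_eq_card_even_mex_index[OF assms] by simp
  then have "(of_nat (p_mex A t n) :: bit) = of_nat (\<Sum>L\<in>mpartitions n. mex_index t A L + 1)"
    by (simp add: of_nat_bit_eq)
  also have "(\<Sum>L\<in>mpartitions n. mex_index t A L + 1)
      = (\<Sum>j\<le>n. card {L \<in> mpartitions n. j \<le> mex_index t A L})"
  proof (rule sum_card_le_eq[OF finite_mpartitions, symmetric])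
    show "mex_index t A L \<le> n" if "L \<in> mpartitions n" for L
      using that mex_index_le_sum_mset[OF assms(1) A, of L] unfolding mpartitions_def by simp
  qed
  also have "(of_nat \<dots> :: bit) = (\<Sum>j\<le>n. of_bool (progression_sum t A j \<le> n)
     * of_nat (partition_number (n - progression_sum t A j)))"
    unfolding of_nat_sum card_mpartitions_le_mex_index[OF assms(1) A] by (intro sum.cong refl) simp
  finally show ?thesis .
qed

lemma le_progression_sum: "0 < t \<Longrightarrow> j \<le> progression_sum t A j"
  by (induction j) (auto simp: progression_sum_def)

lemma p_mex_mod2_atMost:
  assumes "0 < t" "t \<le> A" "n \<le> N"
  shows "(of_nat (p_mex A t n) :: bit) = (\<Sum>j\<le>N. of_bool (progression_sum t A j \<le> n)
     * of_nat (partition_number (n - progression_sum t A j)))"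
  unfolding p_mex_mod2[OF assms(1,2)]
proof (rule sum.mono_neutral_left)
  show "\<forall>j\<in>{..N} - {..n}. of_bool (progression_sum t A j \<le> n)
      * (of_nat (partition_number (n - progression_sum t A j)) :: bit) = 0"
    using le_progression_sum[OF assms(1), of _ A] by (auto dest: le_trans)
qed (use assms(3) in auto)

lemma strict_mono_progression_sum: "0 < t \<Longrightarrow> strict_mono (progression_sum t A)"
  unfolding strict_mono_Suc_iff by (simp add: progression_sum_def)

lemma sum_of_bool_progression_sum_eq:
  assumes "0 < t"
  shows "(\<Sum>j\<le>N. of_bool (progression_sum t A j = N) :: bit)
    = of_bool (N \<in> range (progression_sum t A))"
proof (cases "N \<in> range (progression_sum t A)")
  case True
  then obtain j0 where j0: "progression_sum t A j0 = N" by auto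
  have "progression_sum t A j = N \<longleftrightarrow> j = j0" for j
    using strict_mono_eq[OF strict_mono_progression_sum[OF assms]] j0 by metis
  moreover have "j0 \<le> N" using le_progression_sum[OF assms] j0 by metis
  ultimately show ?thesis using True by simp
next
  case False
  then have "progression_sum t A j \<noteq> N" for j by auto
  then show ?thesis using False by simp
qed

lemma pentagonal_convolution_p_mex_mod2:
  assumes "0 < t" "t \<le> A"
  shows "(\<Sum>g\<le>N. of_bool (gen_pentagonal g) * (of_nat (p_mex A t (N - g)) :: bit))
    = of_bool (N \<in> range (progression_sum t A))"
proof -
  let ?e = "progression_sum t A"
  define H where "H g j = of_bool (gen_pentagonal g \<and> ?e j + g \<le> N)
    * (of_nat (partition_number (N - ?e j - g)) :: bit)" for g j
  have row: "of_bool (gen_pentagonal g) * (of_nat (p_mex A t (N - g)) :: bit) = (\<Sum>j\<le>N. H g j)"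
    if "g \<le> N" for g
    unfolding p_mex_mod2_atMost[OF assms diff_le_self] H_def sum_distrib_left using that
    by (intro sum.cong refl) (auto simp: diff_commute add.commute)
  have column: "(\<Sum>g\<le>N. H g j) = of_bool (?e j = N)" for j
  proof (cases "?e j \<le> N")
    case True
    have "(\<Sum>g\<le>N. H g j)
        = (\<Sum>g\<le>N - ?e j. of_bool (gen_pentagonal g) * of_nat (partition_number (N - ?e j - g)))"
      by (rule sum.mono_neutral_cong_right) (use True in \<open>auto simp: H_def\<close>)
    also have "\<dots> = of_bool (N - ?e j = 0)" by (rule pentagonal_recurrence_mod2)
    finally show ?thesis using True by simp
  next
    case False
    then show ?thesis by (simp add: H_def)
  qed
  have "(\<Sum>g\<le>N. of_bool (gen_pentagonal g) * (of_nat (p_mex A t (N - g)) :: bit))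
      = (\<Sum>g\<le>N. \<Sum>j\<le>N. H g j)"
    by (rule sum.cong[OF refl], rule row) simp
  also have "\<dots> = (\<Sum>j\<le>N. \<Sum>g\<le>N. H g j)" by (rule sum.swap)
  also have "\<dots> = (\<Sum>j\<le>N. of_bool (?e j = N))" by (simp only: column)
  also have "\<dots> = of_bool (N \<in> range ?e)" by (rule sum_of_bool_progression_sum_eq[OF assms(1)])
  finally show ?thesis .
qed

lemma exists_odd_p_mex:
  assumes "0 < t" "t \<le> A" "gen_pentagonal N" "N \<notin> range (progression_sum t A)"
  shows "\<exists>g<N. gen_pentagonal g \<and> odd (p_mex A t (N - g))"
proof -
  define f where "f g = of_bool (gen_pentagonal g) * (of_nat (p_mex A t (N - g)) :: bit)" for g
  have "f N = 1"
    using assms(3) p_mex_mod2[OF assms(1,2), of 0] unfolding f_def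
    by (simp add: progression_sum_def partition_number_0)
  moreover have "(\<Sum>g<N. f g) + f N = 0"
    using pentagonal_convolution_p_mex_mod2[OF assms(1,2), of N] assms(4)
    unfolding f_def lessThan_Suc_atMost[symmetric] by simp
  ultimately have "(\<Sum>g<N. f g) \<noteq> 0" by auto
  then obtain g where "g < N" "f g \<noteq> 0" by (meson lessThan_iff sum.not_neutral_contains_not_neutral)
  then show ?thesis unfolding f_def by (auto simp: of_nat_bit_eq)
qed

lemma pentagonal_number_less_imp_le:
  fixes z r :: int
  assumes "z * (3 * z - 1) < r * (3 * r - 1)" "1 \<le> r"
  shows "z * (3 * z - 1) \<le> (r - 1) * (3 * r - 2)"
proof -
  have neg: "(z - r) * (3 * z + 3 * r - 1) < 0" using assms(1) by (simp add: algebra_simps)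
  have "z < r"
  proof (rule ccontr)
    assume "\<not> z < r"
    then have "0 \<le> (z - r) * (3 * z + 3 * r - 1)" using assms(2) by simp
    then show False using neg by simp
  qed
  moreover have "- r < z"
  proof (rule ccontr)
    assume "\<not> - r < z"
    then have "0 < (z - r) * (3 * z + 3 * r - 1)" using assms(2) by (intro mult_neg_neg) auto
    then show False using neg by simp
  qed
  ultimately have "(z + r - 1) * (3 * z - 3 * r + 2) \<le> 0" by (intro mult_nonneg_nonpos) auto
  then show ?thesis by (simp add: algebra_simps)
qed

lemma pentagonal_gap:
  assumes "gen_pentagonal g" "g < N" "2 * int N = int r * (3 * int r - 1)" "1 \<le> r"
  shows "2 * r - 1 \<le> N - g"
proof -
  obtain z where z: "2 * int g = z * (3 * z - 1)"
    using assms(1) unfolding gen_pentagonal_def by blast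
  then have "z * (3 * z - 1) \<le> (int r - 1) * (3 * int r - 2)"
    using assms by (intro pentagonal_number_less_imp_le) auto
  then have "2 * int g + 2 * (2 * int r - 1) \<le> 2 * int N"
    using z assms(3) by (simp add: algebra_simps)
  then have "int (2 * r - 1) \<le> int (N - g)" using assms(2,4) by (simp add: of_nat_diff)
  then show ?thesis by (simp only: of_nat_le_iff)
qed

lemma double_progression_sum:
  "2 * int (progression_sum t (m * t) j) = (int m * int j ^ 2 - (int m - 2) * int j) * int t"
  by (induction j) (simp_all add: progression_sum_def algebra_simps power2_eq_square)

lemma not_in_range_progression_sum:
  assumes "0 < N" "\<And>k. 0 < k \<Longrightarrow> 2 * int N \<noteq> (int m * int k ^ 2 - (int m - 2) * int k) * int t"
  shows "N \<notin> range (progression_sum t (m * t))"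
proof
  assume "N \<in> range (progression_sum t (m * t))"
  then obtain k where k: "progression_sum t (m * t) k = N" by auto
  then have "0 < k" using assms(1) by (cases k) (auto simp: progression_sum_def)
  moreover have "2 * int N = (int m * int k ^ 2 - (int m - 2) * int k) * int t"
    using double_progression_sum[of t m k] k by simp
  ultimately show False using assms(2) by blast
qed

theorem lemma2p3:
  fixes t m r :: nat
  assumes "0 < t" and "0 < m" and "2 \<le> r"
    and "\<forall>k::nat. 0 < k \<longrightarrow>
           int r * (3 * int r - 1) \<noteq> (int m * int k ^ 2 - (int m - 2) * int k) * int t"
  shows "\<exists>n::nat. 2 * r - 1 \<le> n \<and> 2 * n \<le> r * (3 * r - 1) \<and> odd (p_mex (m * t) t n)"
proof -
  define N where "N = r * (3 * r - 1) div 2"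
  have N: "2 * N = r * (3 * r - 1)" unfolding N_def by (cases "even r") auto
  then have "int (2 * N) = int (r * (3 * r - 1))" by (simp only:)
  then have N_int: "2 * int N = int r * (3 * int r - 1)" using assms(3) by (simp add: of_nat_diff)
  have "0 < N" using N assms(3) by (cases N) auto
  have "gen_pentagonal N" unfolding gen_pentagonal_def using N_int by blast
  moreover have "N \<notin> range (progression_sum t (m * t))"
    using not_in_range_progression_sum[OF \<open>0 < N\<close>] assms(4) N_int by metis
  ultimately obtain g where g: "g < N" "gen_pentagonal g" "odd (p_mex (m * t) t (N - g))"
    using exists_odd_p_mex[of t "m * t" N] assms(1,2) by auto
  have "2 * r - 1 \<le> N - g" using pentagonal_gap[OF g(2,1) N_int] assms(3) by simp
  moreover have "2 * (N - g) \<le> r * (3 * r - 1)" using N by simp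
  ultimately show ?thesis using g(3) by blast
qed

end
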